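(* Let $g:\mathbb{R}\to\mathbb{R}$ be a $C^1$ function and let $s$ be a positive integer. Suppose there exists an integer $i\geq 1$ such that $$\lambda_i < \min_{x\in\mathbb{R}} g'(x) < \max_{x\in\mathbb{R}} g'(x) < \lambda_{i+1},$$ where $\lambda_j = j^2$ (in particular, the minimum and maximum of $g'$ on $\mathbb{R}$ are assumed to exist). Then for every $f\in L^2[0,2\pi]$ that is $2\pi/s$-periodic, every solution $u$ of the problem $$-u''(t) + g(u(t)) = f(t),\qquad u(0)=u(2\pi),\quad u'(0)=u'(2\pi),$$ is $2\pi/(ks)$-periodic for some $k\in\mathbb{N}$ (and hence is also $2\pi/s$-periodic).
   Context: $\lambda_j = j^2$, $j\in\{0,1,2,\dots\}$, are the eigenvalues of the periodic eigenvalue problem $-h''=\lambda h$, $h(0)=h(2\pi)$, $h'(0)=h'(2\pi)$. Solutions are sought in $H^1_{per}[0,2\pi]=\{u\in H^1[0,2\pi] : u(0)=u(2\pi),\ u'(0)=u'(2\pi)\}$. A function on $[0,2\pi]$ is called $T$-periodic if its $2\pi$-periodic extension to $\mathbb{R}$ is $T$-periodic. *)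

theory Defs
  imports "HOL-Analysis.Analysis"
begin

definition lam :: "nat \<Rightarrow> real" where
  "lam j = real j ^ 2"

definition L2 :: "(real \<Rightarrow> real) \<Rightarrow> bool" where
  "L2 h \<longleftrightarrow> set_borel_measurable lebesgue {0..2*pi} h
              \<and> set_integrable lebesgue {0..2*pi} (\<lambda>t. (h t)^2)"

text \<open>v is the (L^2) weak derivative of u on [0,2pi], with u its absolutely continuous
  representative: u(t) = u(0) + int_0^t v for all t in [0,2pi].  So u is in H^1[0,2pi].\<close>
definition weak_deriv :: "(real \<Rightarrow> real) \<Rightarrow> (real \<Rightarrow> real) \<Rightarrow> bool" where
  "weak_deriv u v \<longleftrightarrow> L2 v \<and>
     (\<forall>t\<in>{0..2*pi}. u t = u 0 + set_lebesgue_integral lebesgue {0..t} v)"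

text \<open>u solves -u'' + g(u) = f, u(0)=u(2pi), u'(0)=u'(2pi) (u in H^1_per, with
  u' absolutely continuous and the equation holding a.e. on [0,2pi]).\<close>
definition is_solution :: "(real \<Rightarrow> real) \<Rightarrow> (real \<Rightarrow> real) \<Rightarrow> (real \<Rightarrow> real) \<Rightarrow> bool" where
  "is_solution g f u \<longleftrightarrow>
     (\<exists>v w. weak_deriv u v \<and> weak_deriv v w \<and> u 0 = u (2*pi) \<and> v 0 = v (2*pi) \<and>
        (AE t in lebesgue. t \<in> {0..2*pi} \<longrightarrow> - w t + g (u t) = f t))"

definition per_ext :: "(real \<Rightarrow> real) \<Rightarrow> real \<Rightarrow> real" where
  "per_ext h t = h (t - 2*pi * of_int \<lfloor>t / (2*pi)\<rfloor>)"

definition T_periodic :: "real \<Rightarrow> (real \<Rightarrow> real) \<Rightarrow> bool" where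
  "T_periodic T h \<longleftrightarrow> (\<forall>t. per_ext h (t + T) = per_ext h t)"

definition T_periodic_ae :: "real \<Rightarrow> (real \<Rightarrow> real) \<Rightarrow> bool" where
  "T_periodic_ae T h \<longleftrightarrow> (AE t in lebesgue. per_ext h (t + T) = per_ext h t)"

end

theory Submission
  imports Defs
begin

(* Since f is
   T-periodic for T = 2pi/s, the translate u(. + T) solves the same problem, hence equals u, and
   k = 1 works. For two periodic solutions U1, U2 the difference Z = U1 - U2 satisfies
   Z'' = g(U1) - g(U2), which has the sign of Z, so (Z Z')' = Z'^2 + Z (g(U1) - g(U2)) >= 0.
   A nondecreasing periodic function is constant, so Z (g(U1) - g(U2)) = 0 and Z = 0. *)

definition is_primitive :: "(real \<Rightarrow> real) \<Rightarrow> (real \<Rightarrow> real) \<Rightarrow> bool" where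
  "is_primitive H q \<longleftrightarrow> (\<forall>a b. a \<le> b \<longrightarrow> (q has_integral (H b - H a)) {a..b})"

lemma is_primitive_if_cells:
  fixes L :: real
  assumes "L > 0"
    and cell: "\<And>n a b. of_int n * L \<le> a \<Longrightarrow> a \<le> b \<Longrightarrow> b \<le> of_int (n + 1) * L \<Longrightarrow>
                 (q has_integral (H b - H a)) {a..b}"
  shows "is_primitive H q"
proof -
  have cells_apart: "(q has_integral (H b - H a)) {a..b}"
    if "a \<le> b" "\<lfloor>b / L\<rfloor> - \<lfloor>a / L\<rfloor> = int m" for m a b
    using that
  proof (induction m arbitrary: a)
    case 0
    then show ?case
      using cell[of "\<lfloor>a / L\<rfloor>" a b] floor_divide_lower[OF \<open>L > 0\<close>, of a]
        floor_divide_upper[OF \<open>L > 0\<close>, of b] by simp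
  next
    case (Suc m)
    define c where "c = of_int (\<lfloor>a / L\<rfloor> + 1) * L"
    have floor_c: "\<lfloor>c / L\<rfloor> = \<lfloor>a / L\<rfloor> + 1"
      using \<open>L > 0\<close> by (simp add: c_def)
    have "a \<le> c"
      using floor_divide_upper[OF \<open>L > 0\<close>, of a] by (simp add: c_def)
    have "c \<le> of_int \<lfloor>b / L\<rfloor> * L"
      using Suc.prems(2) \<open>L > 0\<close> unfolding c_def by (intro mult_right_mono) simp_all
    then have "c \<le> b"
      using floor_divide_lower[OF \<open>L > 0\<close>, of b] by linarith
    have left: "(q has_integral (H c - H a)) {a..c}"
      using cell[of "\<lfloor>a / L\<rfloor>" a c] floor_divide_lower[OF \<open>L > 0\<close>, of a] \<open>a \<le> c\<close>
      by (simp add: c_def)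
    have right: "(q has_integral (H b - H c)) {c..b}"
      using Suc.IH[of c] \<open>c \<le> b\<close> Suc.prems(2) floor_c by simp
    have "(q has_integral (H c - H a + (H b - H c))) {a..b}"
      by (rule has_integral_combine[OF \<open>a \<le> c\<close> \<open>c \<le> b\<close> left right])
    then show ?case
      by simp
  qed
  show ?thesis
    unfolding is_primitive_def
  proof (intro allI impI)
    fix a b :: real
    assume "a \<le> b"
    then have "\<lfloor>a / L\<rfloor> \<le> \<lfloor>b / L\<rfloor>"
      using \<open>L > 0\<close> by (intro floor_mono divide_right_mono) simp_all
    then show "(q has_integral (H b - H a)) {a..b}"
      using cells_apart[of a b "nat (\<lfloor>b / L\<rfloor> - \<lfloor>a / L\<rfloor>)"] \<open>a \<le> b\<close> by simp
  qed
qed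

lemma is_primitive_has_integral:
  "is_primitive H q \<Longrightarrow> a \<le> b \<Longrightarrow> (q has_integral (H b - H a)) {a..b}"
  unfolding is_primitive_def by blast

lemma is_primitive_eq_integral:
  assumes "is_primitive H q" "a \<le> x"
  shows "H x = H a + integral {a..x} q"
  using is_primitive_has_integral[OF assms] by (simp add: integral_unique)

lemma is_primitive_continuous:
  assumes "is_primitive H q"
  shows "isCont H t"
proof -
  have "q integrable_on {t - 1..t + 1}"
    using is_primitive_has_integral[OF assms, of "t - 1" "t + 1"]
    by (auto intro: has_integral_integrable)
  then have "continuous_on {t - 1..t + 1} (\<lambda>x. H (t - 1) + integral {t - 1..x} q)"
    by (intro continuous_intros indefinite_integral_continuous_1)
  then have "continuous_on {t - 1..t + 1} H"
    by (rule continuous_on_eq) (use is_primitive_eq_integral[OF assms] in auto)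
  then show ?thesis
    by (rule continuous_on_interior) simp
qed

lemma is_primitive_has_derivative:
  assumes "is_primitive H q" "continuous_on UNIV q"
  shows "(H has_real_derivative q t) (at t)"
proof -
  have "((\<lambda>x. integral {t - 1..x} q) has_real_derivative q t) (at t within {t - 1..t + 1})"
    by (rule integral_has_real_derivative) (use assms(2) continuous_on_subset in auto)
  then have "((\<lambda>x. H (t - 1) + integral {t - 1..x} q) has_real_derivative q t) (at t)"
    by (subst (asm) at_within_interior) (auto intro!: derivative_eq_intros)
  then show ?thesis
  proof (rule has_field_derivative_transform_within_open[of _ _ _ "{t - 1<..<t + 1}"])
    show "H (t - 1) + integral {t - 1..x} q = H x" if "x \<in> {t - 1<..<t + 1}" for x
      using that is_primitive_eq_integral[OF assms(1), of "t - 1" x] by simp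
  qed auto
qed

lemma is_primitive_diff:
  assumes "is_primitive H1 q1" "is_primitive H2 q2"
  shows "is_primitive (\<lambda>t. H1 t - H2 t) (\<lambda>t. q1 t - q2 t)"
  unfolding is_primitive_def
proof (intro allI impI)
  fix a b :: real
  assume "a \<le> b"
  then show "((\<lambda>t. q1 t - q2 t) has_integral (H1 b - H2 b - (H1 a - H2 a))) {a..b}"
    using has_integral_diff[OF is_primitive_has_integral[OF assms(1)]
        is_primitive_has_integral[OF assms(2)]]
    by (simp add: algebra_simps)
qed

lemma is_primitive_translate:
  assumes "is_primitive H q"
  shows "is_primitive (\<lambda>t. H (t + c)) (\<lambda>t. q (t + c))"
  unfolding is_primitive_def
proof (intro allI impI)
  fix a b :: real
  assume "a \<le> b"
  then have "(q has_integral (H (b + c) - H (a + c))) {a + c..b + c}"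
    using is_primitive_has_integral[OF assms] by simp
  then show "((\<lambda>t. q (t + c)) has_integral (H (b + c) - H (a + c))) {a..b}"
    using has_integral_shift_Icc_real[of q c _ a b] by (simp add: o_def add.commute)
qed

lemma is_primitive_cong_AE:
  assumes "is_primitive H q" "AE t in lebesgue. q t = q' t"
  shows "is_primitive H q'"
proof -
  obtain N where N: "negligible N" "{t. q t \<noteq> q' t} \<subseteq> N"
    using assms(2) by (auto simp: eventually_ae_filter_negligible)
  show ?thesis
    unfolding is_primitive_def
  proof (intro allI impI)
    fix a b :: real
    assume "a \<le> b"
    show "(q' has_integral (H b - H a)) {a..b}"
      by (rule has_integral_spike[OF N(1) _ is_primitive_has_integral[OF assms(1) \<open>a \<le> b\<close>]])
        (use N(2) in force)
  qed
qed

lemma per_ext_add_2pi: "per_ext h (t + 2*pi) = per_ext h t"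
proof -
  have "\<lfloor>(t + 2*pi) / (2*pi)\<rfloor> = \<lfloor>t / (2*pi)\<rfloor> + 1"
    by (simp add: add_divide_distrib)
  then show ?thesis
    unfolding per_ext_def by (simp add: algebra_simps)
qed

lemma per_ext_eq_shift:
  fixes n :: int
  assumes "n * (2*pi) \<le> x" "x < (n + 1) * (2*pi)"
  shows "per_ext h x = h (x - n * (2*pi))"
proof -
  have "\<lfloor>x / (2*pi)\<rfloor> = n"
    using assms by (subst floor_eq_iff) (simp add: field_simps)
  then show ?thesis
    unfolding per_ext_def by (simp add: mult.commute)
qed

lemma is_primitive_per_ext:
  assumes loc: "\<And>a b. 0 \<le> a \<Longrightarrow> a \<le> b \<Longrightarrow> b \<le> 2*pi \<Longrightarrow> (q has_integral (h b - h a)) {a..b}"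
    and h_2pi: "h 0 = h (2*pi)"
  shows "is_primitive (per_ext h) (per_ext q)"
proof (rule is_primitive_if_cells[of "2*pi"])
  fix n :: int and a b :: real
  assume ab: "n * (2*pi) \<le> a" "a \<le> b" "b \<le> (n + 1) * (2*pi)"
  define c where "c = n * (2*pi)"
  have per_ext_h: "per_ext h x = h (x - c)" if "c \<le> x" "x \<le> c + 2*pi" for x
  proof (cases "x = c + 2*pi")
    case True
    then have "per_ext h x = h 0"
      using per_ext_eq_shift[of "n + 1" x h] by (simp add: c_def algebra_simps)
    with True h_2pi show ?thesis by simp
  next
    case False
    with that show ?thesis
      using per_ext_eq_shift[of n x h] by (simp add: c_def algebra_simps)
  qed
  have "(q has_integral (h (b - c) - h (a - c))) {a + - c..b + - c}"
    using loc[of "a - c" "b - c"] ab by (simp add: c_def algebra_simps)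
  then have shifted: "((\<lambda>t. q (t - c)) has_integral (per_ext h b - per_ext h a)) {a..b}"
    using has_integral_shift_Icc_real[of q "- c" _ a b] per_ext_h[of a] per_ext_h[of b] ab
    by (simp add: o_def c_def algebra_simps)
  show "(per_ext q has_integral (per_ext h b - per_ext h a)) {a..b}"
  proof (rule has_integral_spike[OF _ _ shifted])
    show "negligible {c + 2*pi}"
      by simp
    show "per_ext q x = q (x - c)" if "x \<in> {a..b} - {c + 2*pi}" for x
      using that ab per_ext_eq_shift[of n x q] by (simp add: c_def algebra_simps)
  qed
qed simp

lemma L2_imp_absolutely_integrable:
  assumes "L2 h"
  shows "h absolutely_integrable_on {0..2*pi}"
proof -
  interpret finite_measure "lebesgue_on {0..2*pi}"
    by (rule finite_measureI) (simp add: emeasure_restrict_space)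
  have "h \<in> borel_measurable (lebesgue_on {0..2*pi})"
    and "integrable (lebesgue_on {0..2*pi}) (\<lambda>t. (h t)^2)"
    using assms unfolding L2_def set_borel_measurable_def set_integrable_def
    by (simp_all add: borel_measurable_restrict_space_iff integrable_restrict_space)
  then have "integrable (lebesgue_on {0..2*pi}) h"
    by (rule square_integrable_imp_integrable)
  then show ?thesis
    unfolding set_integrable_def by (simp add: integrable_restrict_space)
qed

lemma weak_deriv_has_integral:
  assumes "weak_deriv u v" "0 \<le> a" "a \<le> b" "b \<le> 2*pi"
  shows "(v has_integral (u b - u a)) {a..b}"
proof -
  have v: "v absolutely_integrable_on {0..2*pi}"
    using assms(1) L2_imp_absolutely_integrable unfolding weak_deriv_def by blast
  have from_0: "(v has_integral (u t - u 0)) {0..t}" if "0 \<le> t" "t \<le> 2*pi" for t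
  proof -
    have "{0..t} \<subseteq> {0..2*pi}"
      using that by simp
    then have vt: "v absolutely_integrable_on {0..t}"
      by (intro set_integrable_subset[OF v]) simp_all
    have "\<forall>t\<in>{0..2*pi}. u t = u 0 + (LINT x:{0..t}|lebesgue. v x)"
      using assms(1) unfolding weak_deriv_def by (rule conjunct2)
    then have "u t = u 0 + (LINT x:{0..t}|lebesgue. v x)"
      by (rule bspec) (use that in simp)
    then have "u t = u 0 + integral {0..t} v"
      by (simp only: set_lebesgue_integral_eq_integral(2)[OF vt])
    then show ?thesis
      using set_lebesgue_integral_eq_integral(1)[OF vt] by (simp add: has_integral_integrable_integral)
  qed
  obtain I where I: "(v has_integral I) {a..b}"
    using from_0[of b] assms(2-4) integrable_subinterval_real[of v 0 b a b] by auto
  have "(v has_integral (u a - u 0)) {0..a}"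
    using from_0 assms(2-4) by simp
  then have "(v has_integral (u a - u 0 + I)) {0..b}"
    by (rule has_integral_combine[OF assms(2,3) _ I])
  moreover have "(v has_integral (u b - u 0)) {0..b}"
    using from_0 assms(2-4) by simp
  ultimately have "u a - u 0 + I = u b - u 0"
    by (rule has_integral_unique)
  then have "I = u b - u a"
    by linarith
  with I show ?thesis
    by simp
qed

lemma AE_reduce_mod_2pi:
  assumes "AE t in lebesgue. t \<in> {0..2*pi} \<longrightarrow> P t"
  shows "AE r in lebesgue. P (r - 2*pi * \<lfloor>r / (2*pi)\<rfloor>)"
proof -
  obtain N where N: "negligible N" "{t. \<not> (t \<in> {0..2*pi} \<longrightarrow> P t)} \<subseteq> N"
    using assms unfolding eventually_ae_filter_negligible by blast
  define M where "M = (\<Union>k::int. (+) (2*pi * k) ` N)"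
  have "negligible M"
    unfolding M_def by (rule negligible_countable_Union) (auto intro: negligible_translation N(1))
  moreover have "r \<in> M" if "\<not> P (r - 2*pi * \<lfloor>r / (2*pi)\<rfloor>)" for r
  proof -
    have "\<lfloor>r / (2*pi)\<rfloor> * (2*pi) \<le> r" "r < (\<lfloor>r / (2*pi)\<rfloor> + 1) * (2*pi)"
      by (simp_all add: floor_divide_lower floor_divide_upper)
    then have "r - 2*pi * \<lfloor>r / (2*pi)\<rfloor> \<in> {0..2*pi}"
      by (simp add: algebra_simps)
    with that N(2) have "r - 2*pi * \<lfloor>r / (2*pi)\<rfloor> \<in> N" by blast
    then have "r \<in> (+) (2*pi * \<lfloor>r / (2*pi)\<rfloor>) ` N"
      by (rule rev_image_eqI) simp
    then show ?thesis
      unfolding M_def by (rule UN_I[OF UNIV_I])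
  qed
  ultimately show ?thesis
    unfolding eventually_ae_filter_negligible by blast
qed

definition ode_solution ::
    "(real \<Rightarrow> real) \<Rightarrow> (real \<Rightarrow> real) \<Rightarrow> (real \<Rightarrow> real) \<Rightarrow> (real \<Rightarrow> real) \<Rightarrow> bool" where
  "ode_solution g F U V \<longleftrightarrow> is_primitive U V \<and> is_primitive V (\<lambda>t. g (U t) - F t)"

lemma is_solution_per_ext:
  assumes "is_solution g f u"
  obtains v where "ode_solution g (per_ext f) (per_ext u) (per_ext v)"
proof -
  obtain v w where wd: "weak_deriv u v" "weak_deriv v w"
    and bc: "u 0 = u (2*pi)" "v 0 = v (2*pi)"
    and eq: "AE t in lebesgue. t \<in> {0..2*pi} \<longrightarrow> - w t + g (u t) = f t"
    using assms unfolding is_solution_def by blast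
  have prim_u: "is_primitive (per_ext u) (per_ext v)"
    by (rule is_primitive_per_ext[OF weak_deriv_has_integral[OF wd(1)] bc(1)])
  have prim_v: "is_primitive (per_ext v) (per_ext w)"
    by (rule is_primitive_per_ext[OF weak_deriv_has_integral[OF wd(2)] bc(2)])
  have "AE t in lebesgue. per_ext w t = g (per_ext u t) - per_ext f t"
    using AE_reduce_mod_2pi[OF eq] by eventually_elim (simp add: per_ext_def)
  with prim_v have "is_primitive (per_ext v) (\<lambda>t. g (per_ext u t) - per_ext f t)"
    by (rule is_primitive_cong_AE)
  with prim_u show thesis
    by (intro that) (simp add: ode_solution_def)
qed

lemma ode_solution_translate:
  assumes "ode_solution g F U V" "AE t in lebesgue. F (t + c) = F t"
  shows "ode_solution g F (\<lambda>t. U (t + c)) (\<lambda>t. V (t + c))"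
proof -
  have U: "is_primitive U V" and V: "is_primitive V (\<lambda>t. g (U t) - F t)"
    using assms(1) unfolding ode_solution_def by simp_all
  have "is_primitive (\<lambda>t. V (t + c)) (\<lambda>t. g (U (t + c)) - F (t + c))"
    using is_primitive_translate[OF V, of c] by simp
  moreover have "AE t in lebesgue. g (U (t + c)) - F (t + c) = g (U (t + c)) - F t"
    using assms(2) by eventually_elim simp
  ultimately have "is_primitive (\<lambda>t. V (t + c)) (\<lambda>t. g (U (t + c)) - F t)"
    by (rule is_primitive_cong_AE)
  with is_primitive_translate[OF U, of c] show ?thesis
    unfolding ode_solution_def by simp
qed

lemma strict_mono_diff_mult_pos:
  fixes g :: "'a::linordered_idom \<Rightarrow> 'a"
  assumes "strict_mono g" "x \<noteq> y"
  shows "(x - y) * (g x - g y) > 0"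
  using assms by (cases "x < y") (auto simp: strict_mono_less mult_pos_pos mult_neg_neg)

lemma mono_periodic_derivative_eq_0:
  fixes E :: "real \<Rightarrow> real"
  assumes "mono E" "\<And>x. E (x + L) = E x" "L > 0" "(E has_real_derivative D) (at t)"
  shows "D = 0"
proof (rule DERIV_local_max[OF assms(4), of "L / 2"])
  show "\<forall>y. \<bar>t - y\<bar> < L / 2 \<longrightarrow> E y \<le> E t"
  proof (intro allI impI)
    fix y
    assume "\<bar>t - y\<bar> < L / 2"
    then have "y \<le> t - L / 2 + L" "t - L / 2 \<le> t"
      using \<open>L > 0\<close> by linarith+
    then have "E y \<le> E (t - L / 2 + L)" "E (t - L / 2) \<le> E t"
      using \<open>mono E\<close> by (simp_all add: monoD)
    then show "E y \<le> E t"
      using assms(2)[of "t - L / 2"] by simp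
  qed
qed (use assms(3) in simp)

lemma periodic_ode_solution_unique:
  fixes g F U1 V1 U2 V2 :: "real \<Rightarrow> real"
  assumes g: "strict_mono g" "continuous_on UNIV g" and "L > 0"
    and sol: "ode_solution g F U1 V1" "ode_solution g F U2 V2"
    and per: "\<And>t. U1 (t + L) = U1 t" "\<And>t. V1 (t + L) = V1 t"
      "\<And>t. U2 (t + L) = U2 t" "\<And>t. V2 (t + L) = V2 t"
  shows "U1 t = U2 t"
proof -
  define Z where "Z t = U1 t - U2 t" for t
  define Z' where "Z' t = V1 t - V2 t" for t
  define Q where "Q t = g (U1 t) - g (U2 t)" for t
  have U1: "is_primitive U1 V1" and V1: "is_primitive V1 (\<lambda>t. g (U1 t) - F t)"
    and U2: "is_primitive U2 V2" and V2: "is_primitive V2 (\<lambda>t. g (U2 t) - F t)"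
    using sol unfolding ode_solution_def by simp_all
  have prim_Z: "is_primitive Z Z'"
    unfolding Z_def[abs_def] Z'_def[abs_def] by (rule is_primitive_diff[OF U1 U2])
  have prim_Z': "is_primitive Z' Q"
    using is_primitive_diff[OF V1 V2] unfolding Q_def[abs_def] Z'_def[abs_def] by simp
  have "continuous_on UNIV U1" "continuous_on UNIV U2"
    using is_primitive_continuous[OF U1] is_primitive_continuous[OF U2]
    by (simp_all add: continuous_at_imp_continuous_on)
  then have "continuous_on UNIV Q"
    unfolding Q_def[abs_def] by (intro continuous_on_diff continuous_on_compose2[OF g(2)]) auto
  moreover have "continuous_on UNIV Z'"
    using is_primitive_continuous[OF prim_Z'] by (simp add: continuous_at_imp_continuous_on)
  ultimately have dZ: "(Z has_real_derivative Z' t) (at t)"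
    and dZ': "(Z' has_real_derivative Q t) (at t)" for t
    by (simp_all add: is_primitive_has_derivative[OF prim_Z] is_primitive_has_derivative[OF prim_Z'])
  define E where "E t = Z t * Z' t" for t
  have dE: "(E has_real_derivative (Z' t)^2 + Z t * Q t) (at t)" for t
    unfolding E_def[abs_def]
    by (rule DERIV_cong[OF DERIV_mult[OF dZ dZ']]) (simp add: power2_eq_square algebra_simps)
  have ZQ_pos: "Z t * Q t > 0" if "Z t \<noteq> 0" for t
    using strict_mono_diff_mult_pos[OF g(1)] that unfolding Z_def Q_def by simp
  have "Z t * Q t \<ge> 0" for t
    using ZQ_pos[of t] by (cases "Z t = 0") auto
  then have dE_nonneg: "(Z' t)^2 + Z t * Q t \<ge> 0" for t
    by (simp add: add_nonneg_nonneg)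
  have "mono E"
  proof (rule monoI)
    fix x y :: real
    assume "x \<le> y"
    then show "E x \<le> E y"
      by (rule DERIV_nonneg_imp_nondecreasing) (use dE dE_nonneg in blast)
  qed
  moreover have "E (t + L) = E t" for t
    unfolding E_def Z_def Z'_def by (simp add: per)
  ultimately have "(Z' t)^2 + Z t * Q t = 0"
    using \<open>L > 0\<close> dE by (rule mono_periodic_derivative_eq_0)
  then have "Z t * Q t \<le> 0"
    using zero_le_power2[of "Z' t"] by linarith
  then have "Z t = 0"
    using ZQ_pos[of t] by fastforce
  then show ?thesis
    unfolding Z_def by simp
qed

lemma strict_mono_if_has_derivative_pos:
  fixes g g' :: "real \<Rightarrow> real"
  assumes "\<And>x. (g has_real_derivative g' x) (at x)" "\<And>x. g' x > 0"
  shows "strict_mono g"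
proof (rule strict_monoI)
  fix x y :: real
  assume "x < y"
  then show "g x < g y"
    by (rule DERIV_pos_imp_increasing) (use assms in blast)
qed

lemma is_solution_T_periodic:
  assumes g: "strict_mono g" "continuous_on UNIV g"
    and f: "T_periodic_ae T f" and u: "is_solution g f u"
  shows "T_periodic T u"
proof -
  obtain v where sol: "ode_solution g (per_ext f) (per_ext u) (per_ext v)"
    using is_solution_per_ext[OF u] .
  have sol_T: "ode_solution g (per_ext f) (\<lambda>t. per_ext u (t + T)) (\<lambda>t. per_ext v (t + T))"
    using f unfolding T_periodic_ae_def by (rule ode_solution_translate[OF sol])
  have shift_2pi: "per_ext h (t + 2*pi + T) = per_ext h (t + T)" for h :: "real \<Rightarrow> real" and t
    using per_ext_add_2pi[of h "t + T"] by (simp add: add_ac)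
  have "per_ext u (t + T) = per_ext u t" for t
    by (rule periodic_ode_solution_unique[where L = "2*pi", OF g _ sol_T sol])
      (simp_all add: shift_2pi per_ext_add_2pi)
  then show ?thesis
    unfolding T_periodic_def by blast
qed

theorem theorem2:
  fixes g g' :: "real \<Rightarrow> real" and s i :: nat
  assumes C1: "\<forall>x. (g has_real_derivative g' x) (at x)" "continuous_on UNIV g'"
    and s_pos: "s \<ge> 1"
    and i_pos: "i \<ge> 1"
    and minmax: "\<exists>xm xM. (\<forall>x. g' xm \<le> g' x) \<and> (\<forall>x. g' x \<le> g' xM) \<and>
                   lam i < g' xm \<and> g' xm < g' xM \<and> g' xM < lam (i + 1)"
  shows "\<forall>f u. L2 f \<longrightarrow> T_periodic_ae (2*pi / real s) f \<longrightarrow> is_solution g f u \<longrightarrow>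
           (\<exists>k::nat. k \<ge> 1 \<and> T_periodic (2*pi / (real k * real s)) u)"
proof (intro allI impI)
  fix f u :: "real \<Rightarrow> real"
  assume f: "T_periodic_ae (2*pi / real s) f" and u: "is_solution g f u"
  obtain xm where "\<forall>x. g' xm \<le> g' x" "lam i < g' xm"
    using minmax by blast
  then have "g' x > 0" for x
    using zero_le_power2[of "real i"] unfolding lam_def by (metis le_less_trans less_le_trans)
  then have "strict_mono g"
    using C1(1) strict_mono_if_has_derivative_pos by blast
  moreover have "continuous_on UNIV g"
    using C1(1) DERIV_isCont by (blast intro: continuous_at_imp_continuous_on)
  ultimately have "T_periodic (2*pi / real s) u"
    using f u by (rule is_solution_T_periodic)
  then show "\<exists>k::nat. k \<ge> 1 \<and> T_periodic (2*pi / (real k * real s)) u"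
    by (intro exI[of _ 1]) simp
qed

end
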